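(* Let $n \in \mathbb{N}$ be even. For every $\epsilon > 0$ sufficiently small, there exists a set $X$ of $n$ points in $\mathbb{R}^2$ (an instance of the Euclidean TSP in the plane) such that the approximation ratio of X-opt on $X$ is at least $\frac{n}{2}(1-\epsilon)$. That is, there is a noncrossing tour $T$ through $X$ with $\ell(T) \geq \frac{n}{2}(1-\epsilon)\cdot \ell(T^* )$, where $T^*$ is a shortest tour through $X$. In particular, the approximation ratio can be brought arbitrarily close to $\frac{n}{2}$.
   Context: Euclidean TSP in the plane: given a finite set $X \subset \mathbb{R}^2$, a tour is a Hamiltonian cycle on $X$; the length of an edge $\{x,y\}$ is the Euclidean distance $d(x,y)$, and the length $\ell(T)$ of a tour is the sum of its edge lengths. For an edge $e=\{x,y\}$, $L(e)$ denotes the closed line segment from $x$ to $y$. A set of edges is noncrossing if no two of its edges have intersecting line segments (other than at a shared endpoint). X-opt is the local search heuristic that repeatedly replaces two edges of the tour whose line segments intersect by two other edges so as to obtain a tour again; its local optima are exactly the noncrossing tours. The approximation ratio of X-opt on an instance is the ratio of the length of the longest noncrossing tour to the length of an optimal (shortest) tour. *)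

theory Defs
  imports "HOL-Analysis.Analysis"
begin

type_synonym point = "real^2"

text \<open>A tour on a finite set X is a Hamiltonian cycle on X, represented by a list
  enumerating the points of X (each exactly once) in cyclic order.\<close>
definition is_tour :: "point set \<Rightarrow> point list \<Rightarrow> bool" where
  "is_tour X xs \<longleftrightarrow> distinct xs \<and> set xs = X"

definition tour_edges :: "point list \<Rightarrow> point set set" where
  "tour_edges xs = {{xs ! i, xs ! ((i + 1) mod length xs)} | i. i < length xs}"

definition tour_length :: "point list \<Rightarrow> real" where
  "tour_length xs = (\<Sum>i<length xs. dist (xs ! i) (xs ! ((i + 1) mod length xs)))"

definition noncrossing :: "point set set \<Rightarrow> bool" where
  "noncrossing E \<longleftrightarrow>
     (\<forall>x y u v. {x, y} \<in> E \<and> {u, v} \<in> E \<and> {x, y} \<noteq> {u, v} \<longrightarrow>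
        closed_segment x y \<inter> closed_segment u v \<subseteq> {x, y} \<inter> {u, v})"

definition noncrossing_tour :: "point set \<Rightarrow> point list \<Rightarrow> bool" where
  "noncrossing_tour X xs \<longleftrightarrow> is_tour X xs \<and> noncrossing (tour_edges xs)"

definition opt_tour_length :: "point set \<Rightarrow> real" where
  "opt_tour_length X = Min {tour_length xs | xs. is_tour X xs}"

end

theory Submission
  imports Defs
begin

(* The instance consists of the origin, k points on the line x = 1 and k - 1 points on the
   line x = s, with s of order eps / k^2.  The noncrossing tour alternates between the two
   lines, so each of its 2k edges has length at least 1 - s, while the tour visiting first
   the points with x <= s and then those with x = 1 crosses between the lines only twice
   and has length 2 + O(s k^2).

   The alternating tour is noncrossing because its edges fan out downwards from the edge at
   the top: each endpoint of a later edge either is the corresponding endpoint of an earlier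
   edge or lies strictly below that edge's line, and segments related in this way can only
   meet in a shared endpoint.  The closing edge, from the lowest point back to the origin,
   lies below all the others in the same sense. *)

section \<open>Segments meeting only in shared endpoints\<close>

lemma closed_segment_halfspace_endpoint:
  fixes a p q z :: "'a::real_inner"
  assumes "b \<le> a \<bullet> p" "b < a \<bullet> q" "z \<in> closed_segment p q" "a \<bullet> z \<le> b"
  shows "z = p"
proof -
  obtain u where u: "0 \<le> u" "u \<le> 1" "z = (1 - u) *\<^sub>R p + u *\<^sub>R q"
    using assms(3) by (auto simp: in_segment)
  have "a \<bullet> z = b + (1 - u) * (a \<bullet> p - b) + u * (a \<bullet> q - b)"
    unfolding u(3) by (simp add: algebra_simps)
  then have "u * (a \<bullet> q - b) \<le> 0"
    using assms(1,4) u(2) mult_nonneg_nonneg[of "1 - u" "a \<bullet> p - b"] by linarith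
  then have "u = 0"
    using u(1) assms(2) by (simp add: mult_le_0_iff)
  then show ?thesis using u(3) by simp
qed

lemma closed_segment_Int_subset_shared_endpoints:
  fixes a p q p' q' :: "'a::real_inner"
  assumes "a \<bullet> p = b" "a \<bullet> q = b"
    and "p' = p \<or> b < a \<bullet> p'" "q' = q \<or> b < a \<bullet> q'"
    and "(p', q') \<noteq> (p, q)"
  shows "closed_segment p q \<inter> closed_segment p' q' \<subseteq> {p, q} \<inter> {p', q'}"
proof
  fix z assume z: "z \<in> closed_segment p q \<inter> closed_segment p' q'"
  have "closed_segment p q \<subseteq> {x. a \<bullet> x = b}"
    using assms(1,2) by (intro closed_segment_subset convex_hyperplane) auto
  with z have az: "a \<bullet> z = b" by blast
  have side: "b \<le> a \<bullet> p'" "b \<le> a \<bullet> q'"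
    using assms(1-4) by auto
  show "z \<in> {p, q} \<inter> {p', q'}"
  proof (cases "b < a \<bullet> p'")
    case True
    have "z = q'"
      using closed_segment_halfspace_endpoint[of b a q' p' z] True side z az
      by (simp add: closed_segment_commute)
    then show ?thesis using assms(4) az True by auto
  next
    case False
    then have "p' = p" "b < a \<bullet> q'" using assms(3-5) by auto
    then have "z = p'"
      using closed_segment_halfspace_endpoint[of b a p' q' z] side z az by simp
    then show ?thesis using \<open>p' = p\<close> by simp
  qed
qed

lemma inner_2: "(a::real^2) \<bullet> x = a$1 * x$1 + a$2 * x$2"
  by (simp add: inner_vec_def sum_2)

definition cross2 :: "point \<Rightarrow> point \<Rightarrow> real" where
  "cross2 u v = u$1 * v$2 - u$2 * v$1"

text \<open>orient p q x is negative iff x lies strictly to the right of the line directed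
  from p to q.\<close>

definition orient :: "point \<Rightarrow> point \<Rightarrow> point \<Rightarrow> real" where
  "orient p q x = cross2 (q - p) (x - p)"

lemma orient_eq_cross2: "orient p q x = cross2 p q + cross2 q x + cross2 x p"
  by (simp add: orient_def cross2_def algebra_simps)

lemma closed_segment_Int_subset_shared_endpoints_plane:
  assumes "p' = p \<or> orient p q p' < 0" "q' = q \<or> orient p q q' < 0" "(p', q') \<noteq> (p, q)"
  shows "closed_segment p q \<inter> closed_segment p' q' \<subseteq> {p, q} \<inter> {p', q'}"
proof -
  define a :: point where "a = vector [q$2 - p$2, p$1 - q$1]"
  have a: "a \<bullet> x = a \<bullet> p - orient p q x" for x
    unfolding inner_2 by (simp add: a_def orient_def cross2_def algebra_simps)
  have "orient p q q = 0"
    by (simp add: orient_def cross2_def)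
  show ?thesis
  proof (rule closed_segment_Int_subset_shared_endpoints)
    show "a \<bullet> q = a \<bullet> p"
      using a[of q] \<open>orient p q q = 0\<close> by simp
    show "p' = p \<or> a \<bullet> p < a \<bullet> p'" "q' = q \<or> a \<bullet> p < a \<bullet> q'"
      using assms(1,2) a[of p'] a[of q'] by auto
  qed (use assms(3) in simp_all)
qed

lemma closed_segment_eq_if_doubleton_eq: "{a, b} = {c, d} \<Longrightarrow> closed_segment a b = closed_segment c d"
  by (metis closed_segment_commute doubleton_eq_iff)

lemma noncrossing_indexed:
  fixes a b :: "nat \<Rightarrow> point"
  assumes "\<And>i j. i < j \<Longrightarrow> j < N \<Longrightarrow> {a i, b i} \<noteq> {a j, b j} \<Longrightarrow>
      closed_segment (a i) (b i) \<inter> closed_segment (a j) (b j) \<subseteq> {a i, b i} \<inter> {a j, b j}"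
  shows "noncrossing {{a i, b i} | i. i < N}"
  unfolding noncrossing_def
proof (intro allI impI)
  fix x y u v
  assume H: "{x, y} \<in> {{a i, b i} | i. i < N} \<and> {u, v} \<in> {{a i, b i} | i. i < N} \<and> {x, y} \<noteq> {u, v}"
  then obtain i j where ij: "i < N" "j < N" "{x, y} = {a i, b i}" "{u, v} = {a j, b j}"
    by blast
  with H have ne: "{a i, b i} \<noteq> {a j, b j}"
    by simp
  have "closed_segment (a i) (b i) \<inter> closed_segment (a j) (b j) \<subseteq> {a i, b i} \<inter> {a j, b j}"
  proof (cases "i < j")
    case True
    then show ?thesis using assms ij ne by blast
  next
    case False
    then have "j < i \<or> i = j" by linarith
    with ne have "j < i" by auto
    then show ?thesis using assms[of j i] ij ne by blast
  qed
  then show "closed_segment x y \<inter> closed_segment u v \<subseteq> {x, y} \<inter> {u, v}"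
    using ij closed_segment_eq_if_doubleton_eq by metis
qed

lemma tour_edges_map_upt:
  "tour_edges (map f [0..<n]) = {{f i, f ((i + 1) mod n)} | i. i < n}"
proof -
  have "{map f [0..<n] ! i, map f [0..<n] ! ((i + 1) mod n)} = {f i, f ((i + 1) mod n)}"
    if "i < n" for i
    using that by simp
  then show ?thesis
    unfolding tour_edges_def length_map length_upt diff_zero by blast
qed

lemma tour_length_map_upt:
  "tour_length (map f [0..<n]) = (\<Sum>i<n. dist (f i) (f ((i + 1) mod n)))"
  unfolding tour_length_def by (intro sum.cong) auto

lemma opt_tour_length_le:
  assumes "finite X" "is_tour X xs"
  shows "opt_tour_length X \<le> tour_length xs"
proof -
  have "{tour_length xs | xs. is_tour X xs} \<subseteq> tour_length ` {xs. set xs \<subseteq> X \<and> length xs = card X}"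
    by (auto simp: is_tour_def distinct_card)
  then have "finite {tour_length xs | xs. is_tour X xs}"
    using finite_lists_length_eq[OF assms(1)] finite_subset by blast
  then show ?thesis
    unfolding opt_tour_length_def using assms(2) by (auto intro: Min_le)
qed

section \<open>The zigzag instance\<close>

definition zigzag_abscissa :: "real \<Rightarrow> nat \<Rightarrow> real" where
  "zigzag_abscissa s j = (if j = 0 then 0 else if odd j then 1 else s)"

definition zigzag_point :: "real \<Rightarrow> nat \<Rightarrow> nat \<Rightarrow> point" where
  "zigzag_point s k j = zigzag_abscissa s j *\<^sub>R vector [1, s * (real k - real j)]"

lemma zigzag_point_component:
  "zigzag_point s k j $ 1 = zigzag_abscissa s j"
  "zigzag_point s k j $ 2 = zigzag_abscissa s j * s * (real k - real j)"
  by (simp_all add: zigzag_point_def)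

lemma zigzag_abscissa_pos: "0 < s \<Longrightarrow> j \<noteq> 0 \<Longrightarrow> 0 < zigzag_abscissa s j"
  by (simp add: zigzag_abscissa_def)

lemma zigzag_abscissa_even: "0 \<le> s \<Longrightarrow> even j \<Longrightarrow> 0 \<le> zigzag_abscissa s j \<and> zigzag_abscissa s j \<le> s"
  by (simp add: zigzag_abscissa_def)

lemma zigzag_abscissa_odd: "odd j \<Longrightarrow> zigzag_abscissa s j = 1"
  using odd_pos by (auto simp: zigzag_abscissa_def)

lemma zigzag_point_inj:
  assumes "0 < s" "s < 1"
  shows "inj (zigzag_point s k)"
proof (rule injI)
  fix i j assume eq: "zigzag_point s k i = zigzag_point s k j"
  then have x: "zigzag_abscissa s i = zigzag_abscissa s j"
    by (metis zigzag_point_component(1))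
  then consider "i = 0" "j = 0" | "i \<noteq> 0" "j \<noteq> 0"
    using assms by (auto simp: zigzag_abscissa_def split: if_splits)
  then show "i = j"
  proof cases
    case 2
    have "zigzag_abscissa s i * s \<noteq> 0"
      using 2 assms zigzag_abscissa_pos[OF assms(1), of i] by simp
    moreover have "zigzag_abscissa s i * s * (real k - real i) = zigzag_abscissa s i * s * (real k - real j)"
      using eq x by (metis zigzag_point_component(2))
    ultimately show ?thesis by simp
  qed simp
qed

lemma cross2_zigzag_point:
  "cross2 (zigzag_point s k a) (zigzag_point s k b)
     = s * zigzag_abscissa s a * zigzag_abscissa s b * (real a - real b)"
  by (simp add: cross2_def zigzag_point_component algebra_simps)

lemma orient_zigzag_first_edge:
  "orient (zigzag_point s k 0) (zigzag_point s k 1) (zigzag_point s k c)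
     = s * zigzag_abscissa s c * (1 - real c)"
  by (simp add: orient_eq_cross2 cross2_zigzag_point zigzag_abscissa_def algebra_simps)

lemma orient_zigzag_last_edge:
  assumes "k \<noteq> 0"
  shows "orient (zigzag_point s k (2*k - 1)) (zigzag_point s k 0) (zigzag_point s k c)
     = s * zigzag_abscissa s c * (real c + 1 - 2 * real k)"
  using assms by (simp add: orient_eq_cross2 cross2_zigzag_point zigzag_abscissa_def algebra_simps)

lemma orient_zigzag_inner_edge:
  assumes "even e" "e \<noteq> 0" "odd r" "c \<noteq> 0"
  shows "orient (zigzag_point s k e) (zigzag_point s k r) (zigzag_point s k c)
     = (1 - s) * s * zigzag_abscissa s c * (if even c then real e - real c else real r - real c)"
proof -
  have "zigzag_abscissa s e = s" "zigzag_abscissa s r = 1"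
    using assms by (auto simp: zigzag_abscissa_def odd_pos)
  then show ?thesis
    using assms(4) by (cases "even c") (simp_all add: orient_eq_cross2 cross2_zigzag_point zigzag_abscissa_def algebra_simps)
qed

text \<open>Edge m of the zigzag tour joins the points m and (m + 1) mod 2k; its endpoint with
  even index is zigzag_left k m, the one with odd index (on the line x = 1) zigzag_right m.\<close>

definition zigzag_left :: "nat \<Rightarrow> nat \<Rightarrow> nat" where
  "zigzag_left k m = (if even m then m else (m + 1) mod (2*k))"

definition zigzag_right :: "nat \<Rightarrow> nat" where
  "zigzag_right m = (if even m then m + 1 else m)"

lemma zigzag_edge_ends:
  "m < 2*k \<Longrightarrow> {m, (m + 1) mod (2*k)} = {zigzag_left k m, zigzag_right m}"
  by (auto simp: zigzag_left_def zigzag_right_def)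

lemma zigzag_edge_points:
  "m < 2*k \<Longrightarrow> {zigzag_point s k m, zigzag_point s k ((m + 1) mod (2*k))}
     = {zigzag_point s k (zigzag_left k m), zigzag_point s k (zigzag_right m)}"
  using arg_cong[OF zigzag_edge_ends, of m k "image (zigzag_point s k)"] by simp

lemma zigzag_left_right:
  assumes "m < 2*k"
  shows "even (zigzag_left k m)" "zigzag_left k m < 2*k" "odd (zigzag_right m)" "zigzag_right m < 2*k"
  using assms by (auto simp: zigzag_left_def zigzag_right_def mod_if)

lemma zigzag_left_nonzero: "0 < m \<Longrightarrow> m < 2*k - 1 \<Longrightarrow> zigzag_left k m \<noteq> 0"
  by (auto simp: zigzag_left_def)

lemma zigzag_right_mono: "m \<le> m' \<Longrightarrow> zigzag_right m \<le> zigzag_right m'"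
  by (cases "m = m'") (auto simp: zigzag_right_def)

lemma zigzag_left_mono:
  assumes "m \<le> m'" "m' < 2*k - 1"
  shows "zigzag_left k m \<le> zigzag_left k m'"
proof -
  have "(m + 1) mod (2*k) = m + 1" "(m' + 1) mod (2*k) = m' + 1"
    using assms by simp_all
  then show ?thesis
    using assms(1) by (cases "m = m'") (auto simp: zigzag_left_def)
qed

lemma zigzag_edges_Int_subset:
  assumes s: "0 < s" "s < 1" and m: "m < m'" "m' < 2*k"
    and ne: "(zigzag_left k m', zigzag_right m') \<noteq> (zigzag_left k m, zigzag_right m)"
  shows "closed_segment (zigzag_point s k (zigzag_left k m)) (zigzag_point s k (zigzag_right m))
       \<inter> closed_segment (zigzag_point s k (zigzag_left k m')) (zigzag_point s k (zigzag_right m'))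
       \<subseteq> {zigzag_point s k (zigzag_left k m), zigzag_point s k (zigzag_right m)}
         \<inter> {zigzag_point s k (zigzag_left k m'), zigzag_point s k (zigzag_right m')}"
proof -
  let ?P = "zigzag_point s k"
  let ?l = "zigzag_left k m" and ?r = "zigzag_right m"
  let ?l' = "zigzag_left k m'" and ?r' = "zigzag_right m'"
  have pos: "0 < s * zigzag_abscissa s c" if "c \<noteq> 0" for c
    using zigzag_abscissa_pos[OF s(1) that] s(1) by simp
  have inj: "(?P ?l', ?P ?r') \<noteq> (?P ?l, ?P ?r)"
    using ne zigzag_point_inj[OF s] by (auto dest: injD)
  have m_lt: "m < 2*k" using m by simp
  note ends = zigzag_left_right[OF m_lt] zigzag_left_right[OF m(2)]
  \<comment> \<open>the first edge lies above all others, the closing edge below all others\<close>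
  consider "m = 0" | "0 < m" "m' < 2*k - 1" | "0 < m" "m' = 2*k - 1"
    using m by linarith
  then show ?thesis
  proof cases
    case 1
    then have lr: "?l = 0" "?r = 1"
      by (simp_all add: zigzag_left_def zigzag_right_def)
    have side: "orient (?P 0) (?P 1) (?P c) < 0" if "1 < c" for c
      using pos[of c] that orient_zigzag_first_edge[of s k c] by (simp add: mult_pos_neg)
    have "?l' = 0 \<or> 1 < ?l'" "?r' = 1 \<or> 1 < ?r'"
      using ends(5,7) by presburger+
    then show ?thesis
      unfolding lr by (intro closed_segment_Int_subset_shared_endpoints_plane) (use side inj lr in auto)
  next
    case 2
    have l: "?l \<noteq> 0" "?l \<le> ?l'" and r: "?r \<le> ?r'"
      using 2 m zigzag_left_nonzero zigzag_left_mono zigzag_right_mono by auto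
    have side: "orient (?P ?l) (?P ?r) (?P c) < 0"
      if "c \<noteq> 0" "if even c then ?l < c else ?r < c" for c
    proof -
      have "0 < (1 - s) * (s * zigzag_abscissa s c)" using pos[OF that(1)] s by simp
      then show ?thesis
        using that ends(1,3) l(1) by (simp add: orient_zigzag_inner_edge mult_pos_neg split: if_splits)
    qed
    show ?thesis
    proof (rule closed_segment_Int_subset_shared_endpoints_plane)
      show "?P ?l' = ?P ?l \<or> orient (?P ?l) (?P ?r) (?P ?l') < 0"
        using side[of ?l'] l ends(5) by fastforce
      show "?P ?r' = ?P ?r \<or> orient (?P ?l) (?P ?r) (?P ?r') < 0"
        using side[of ?r'] r ends(7) by (fastforce simp: odd_pos)
    qed (rule inj)
  next
    case 3
    then have k: "k \<noteq> 0" "?l' = 0" "?r' = 2*k - 1"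
      using m by (auto simp: zigzag_left_def zigzag_right_def)
    have side: "orient (?P (2*k - 1)) (?P 0) (?P c) < 0" if "c \<noteq> 0" "c < 2*k - 1" for c
    proof -
      have "real c + 1 - 2 * real k < 0"
        using that(2) by linarith
      then show ?thesis
        using pos[OF that(1)] orient_zigzag_last_edge[OF k(1), of s c] by (simp add: mult_pos_neg)
    qed
    have l: "?l \<noteq> 0" "?l < 2*k - 1" and r: "?r \<noteq> 0" "?r \<le> 2*k - 1"
      using 3 m ends(1-4) zigzag_left_nonzero by (auto simp: odd_pos)
    have "closed_segment (?P ?r') (?P ?l') \<inter> closed_segment (?P ?r) (?P ?l)
        \<subseteq> {?P ?r', ?P ?l'} \<inter> {?P ?r, ?P ?l}"
    proof (rule closed_segment_Int_subset_shared_endpoints_plane)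
      show "?P ?r = ?P ?r' \<or> orient (?P ?r') (?P ?l') (?P ?r) < 0"
        using side[of ?r] k r by (cases "?r = 2*k - 1") auto
      show "?P ?l = ?P ?l' \<or> orient (?P ?r') (?P ?l') (?P ?l) < 0"
        using side[of ?l] k l by auto
    qed (use inj in auto)
    then show ?thesis
      unfolding closed_segment_commute[of "?P ?r"] closed_segment_commute[of "?P ?r'"]
        insert_commute[of "?P ?r"] insert_commute[of "?P ?r'"]
      by blast
  qed
qed

definition zigzag_tour :: "real \<Rightarrow> nat \<Rightarrow> point list" where
  "zigzag_tour s k = map (zigzag_point s k) [0..<2*k]"

lemma zigzag_tour_edges:
  "tour_edges (zigzag_tour s k)
     = {{zigzag_point s k (zigzag_left k m), zigzag_point s k (zigzag_right m)} | m. m < 2*k}"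
  unfolding zigzag_tour_def tour_edges_map_upt using zigzag_edge_points by blast

lemma zigzag_tour_noncrossing:
  assumes "0 < s" "s < 1"
  shows "noncrossing (tour_edges (zigzag_tour s k))"
  unfolding zigzag_tour_edges
proof (rule noncrossing_indexed)
  fix m m' assume m: "m < m'" "m' < 2*k"
    and ne: "{zigzag_point s k (zigzag_left k m), zigzag_point s k (zigzag_right m)}
      \<noteq> {zigzag_point s k (zigzag_left k m'), zigzag_point s k (zigzag_right m')}"
  then have "(zigzag_left k m', zigzag_right m') \<noteq> (zigzag_left k m, zigzag_right m)"
    by auto
  then show "closed_segment (zigzag_point s k (zigzag_left k m)) (zigzag_point s k (zigzag_right m))
       \<inter> closed_segment (zigzag_point s k (zigzag_left k m')) (zigzag_point s k (zigzag_right m'))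
       \<subseteq> {zigzag_point s k (zigzag_left k m), zigzag_point s k (zigzag_right m)}
         \<inter> {zigzag_point s k (zigzag_left k m'), zigzag_point s k (zigzag_right m')}"
    by (rule zigzag_edges_Int_subset[OF assms m])
qed

lemma zigzag_noncrossing_tour:
  assumes "0 < s" "s < 1"
  shows "noncrossing_tour (set (zigzag_tour s k)) (zigzag_tour s k)"
  using zigzag_tour_noncrossing[OF assms] inj_on_subset[OF zigzag_point_inj[OF assms] subset_UNIV]
  by (simp add: noncrossing_tour_def is_tour_def zigzag_tour_def distinct_map)

lemma card_zigzag_tour:
  assumes "0 < s" "s < 1"
  shows "card (set (zigzag_tour s k)) = 2*k"
  using card_image[OF inj_on_subset[OF zigzag_point_inj[OF assms] subset_UNIV]]
  by (simp add: zigzag_tour_def)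

section \<open>Tour lengths\<close>

lemma zigzag_tour_length_ge:
  assumes "0 \<le> s"
  shows "2 * real k * (1 - s) \<le> tour_length (zigzag_tour s k)"
proof -
  have "1 - s \<le> dist (zigzag_point s k m) (zigzag_point s k ((m + 1) mod (2*k)))" if "m < 2*k" for m
  proof -
    let ?p = "zigzag_point s k (zigzag_left k m)" and ?q = "zigzag_point s k (zigzag_right m)"
    have "1 - s \<le> dist (?p $ 1) (?q $ 1)"
      using zigzag_abscissa_even[OF assms zigzag_left_right(1)[OF that]]
        zigzag_abscissa_odd[OF zigzag_left_right(3)[OF that]]
      by (simp add: zigzag_point_component dist_real_def) arith
    also have "\<dots> \<le> dist ?p ?q"
      by (rule dist_vec_nth_le)
    finally show ?thesis
      by (metis zigzag_edge_points[OF that] doubleton_eq_iff dist_commute)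
  qed
  then have "(\<Sum>m<2*k. 1 - s) \<le> tour_length (zigzag_tour s k)"
    unfolding zigzag_tour_def tour_length_map_upt by (intro sum_mono) simp
  then show ?thesis by simp
qed

lemma zigzag_point_dist_le:
  assumes s: "0 \<le> s" "s \<le> 1" and "a \<le> 2*k" "b \<le> 2*k"
  shows "dist (zigzag_point s k a) (zigzag_point s k b) \<le> 2 * s * real k + (if even a = even b then s else 1)"
proof -
  have abscissa: "0 \<le> zigzag_abscissa s j \<and> zigzag_abscissa s j \<le> 1" for j
    using s by (simp add: zigzag_abscissa_def)
  have y: "\<bar>zigzag_point s k j $ 2\<bar> \<le> s * real k" if "j \<le> 2*k" for j
  proof -
    have "\<bar>zigzag_point s k j $ 2\<bar> = zigzag_abscissa s j * (s * \<bar>real k - real j\<bar>)"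
      using abscissa[of j] s by (simp add: zigzag_point_component abs_mult)
    also have "\<dots> \<le> 1 * (s * real k)"
      using abscissa[of j] s that by (intro mult_mono mult_left_mono) auto
    finally show ?thesis by simp
  qed
  have x: "\<bar>zigzag_point s k a $ 1 - zigzag_point s k b $ 1\<bar> \<le> (if even a = even b then s else 1)"
    using abscissa[of a] abscissa[of b] zigzag_abscissa_even[OF s(1), of a] zigzag_abscissa_even[OF s(1), of b]
      zigzag_abscissa_odd[of a s] zigzag_abscissa_odd[of b s] s(1)
    by (auto simp: zigzag_point_component)
  have "dist (zigzag_point s k a) (zigzag_point s k b)
      \<le> \<bar>zigzag_point s k a $ 1 - zigzag_point s k b $ 1\<bar> + \<bar>zigzag_point s k a $ 2 - zigzag_point s k b $ 2\<bar>"
    using norm_le_l1_cart[of "zigzag_point s k a - zigzag_point s k b"] by (simp add: dist_norm sum_2)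
  then show ?thesis
    using x y[OF assms(3)] y[OF assms(4)] by linarith
qed

definition evens_then_odds :: "nat \<Rightarrow> nat \<Rightarrow> nat" where
  "evens_then_odds k i = (if i < k then 2*i else 2*(2*k - 1 - i) + 1)"

lemma evens_then_odds_less: "i < 2*k \<Longrightarrow> evens_then_odds k i < 2*k"
  by (simp add: evens_then_odds_def) arith

lemma evens_then_odds_bij: "bij_betw (evens_then_odds k) {..<2*k} {..<2*k}"
proof -
  have "inj_on (evens_then_odds k) {..<2*k}"
    by (rule inj_onI) (auto simp: evens_then_odds_def split: if_splits; presburger)
  moreover have "evens_then_odds k ` {..<2*k} \<subseteq> {..<2*k}"
    using evens_then_odds_less by auto
  ultimately show ?thesis
    by (simp add: bij_betw_def endo_inj_surj)
qed

lemma even_evens_then_odds: "i < 2*k \<Longrightarrow> even (evens_then_odds k i) \<longleftrightarrow> i < k"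
  by (auto simp: evens_then_odds_def)

definition zigzag_short_tour :: "real \<Rightarrow> nat \<Rightarrow> point list" where
  "zigzag_short_tour s k = map (zigzag_point s k \<circ> evens_then_odds k) [0..<2*k]"

lemma zigzag_short_tour_is_tour:
  assumes "0 < s" "s < 1"
  shows "is_tour (set (zigzag_tour s k)) (zigzag_short_tour s k)"
proof -
  have "inj_on (zigzag_point s k \<circ> evens_then_odds k) {..<2*k}"
    using bij_betw_imp_inj_on[OF evens_then_odds_bij] zigzag_point_inj[OF assms]
    by (metis comp_inj_on inj_on_subset subset_UNIV)
  moreover have "(zigzag_point s k \<circ> evens_then_odds k) ` {..<2*k} = zigzag_point s k ` {..<2*k}"
    by (metis image_comp bij_betw_imp_surj_on[OF evens_then_odds_bij])
  ultimately show ?thesis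
    by (simp add: is_tour_def zigzag_short_tour_def zigzag_tour_def distinct_map atLeast0LessThan)
qed

lemma zigzag_short_tour_length_le:
  assumes "0 \<le> s" "s \<le> 1"
  shows "tour_length (zigzag_short_tour s k) \<le> 2 * real k * s * (2 * real k + 1) + 2"
proof -
  let ?e = "evens_then_odds k"
  have step: "dist (zigzag_point s k (?e i)) (zigzag_point s k (?e ((i + 1) mod (2*k))))
      \<le> s * (2 * real k + 1) + ((if i = k - 1 then 1 else 0) + (if i = 2*k - 1 then 1 else 0))"
    if i: "i < 2*k" for i
  proof -
    let ?j = "(i + 1) mod (2*k)"
    have j: "?j < 2*k" using i by simp
    have "(if even (?e i) = even (?e ?j) then s else 1)
        \<le> s + ((if i = k - 1 then 1 else 0) + (if i = 2*k - 1 then 1 else 0))"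
    proof (cases "i = k - 1 \<or> i = 2*k - 1")
      case False
      then have "?j = i + 1" "i + 1 < 2*k" using i by auto
      then have "even (?e i) = even (?e ?j)"
        using even_evens_then_odds[OF i] even_evens_then_odds[OF j] False by auto
      then show ?thesis by simp
    qed (use assms in auto)
    moreover have "?e i \<le> 2*k" "?e ?j \<le> 2*k"
      using evens_then_odds_less i j by (simp_all add: less_imp_le)
    ultimately show ?thesis
      using zigzag_point_dist_le[OF assms, of "?e i" k "?e ?j"] by (simp add: algebra_simps)
  qed
  have indicator: "(\<Sum>i<2*k. if i = c then 1 else 0) \<le> (1::real)" for c
    by simp
  have "tour_length (zigzag_short_tour s k)
      \<le> (\<Sum>i<2*k. s * (2 * real k + 1) + ((if i = k - 1 then 1 else 0) + (if i = 2*k - 1 then 1 else 0)))"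
    unfolding zigzag_short_tour_def tour_length_map_upt comp_def by (intro sum_mono step) simp
  also have "\<dots> \<le> 2 * real k * s * (2 * real k + 1) + 2"
    using indicator[of "k - 1"] indicator[of "2*k - 1"] by (simp add: sum.distrib)
  finally show ?thesis .
qed

lemma zigzag_tour_ratio:
  assumes s: "0 < s" "s < 1" and "\<epsilon> < 1" "2 * s \<le> \<epsilon>" "2 * real k * s * (2 * real k + 1) \<le> \<epsilon>"
  shows "real k * (1 - \<epsilon>) * opt_tour_length (set (zigzag_tour s k)) \<le> tour_length (zigzag_tour s k)"
proof -
  have "opt_tour_length (set (zigzag_tour s k)) \<le> 2 + \<epsilon>"
    using opt_tour_length_le[OF _ zigzag_short_tour_is_tour[OF s, of k]] zigzag_short_tour_length_le[of s k] assms
    by simp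
  then have "(1 - \<epsilon>) * opt_tour_length (set (zigzag_tour s k)) \<le> (1 - \<epsilon>) * (2 + \<epsilon>)"
    using assms(3) by (intro mult_left_mono) auto
  also have "\<dots> = 2 - \<epsilon> - \<epsilon>^2"
    by (simp add: algebra_simps power2_eq_square)
  also have "\<dots> \<le> 2 - 2 * s"
    using assms(4) zero_le_power2[of \<epsilon>] by linarith
  finally have "real k * ((1 - \<epsilon>) * opt_tour_length (set (zigzag_tour s k))) \<le> real k * (2 - 2 * s)"
    by (rule mult_left_mono) simp
  also have "\<dots> \<le> tour_length (zigzag_tour s k)"
    using zigzag_tour_length_ge[of s k] s by (simp add: algebra_simps)
  finally show ?thesis
    by (simp add: mult.assoc)
qed

theorem theorem1:
  fixes n :: nat
  assumes "even n"
  shows "\<exists>\<epsilon>0 > 0. \<forall>\<epsilon>::real. 0 < \<epsilon> \<and> \<epsilon> < \<epsilon>0 \<longrightarrow>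
           (\<exists>X :: point set. finite X \<and> card X = n \<and>
              (\<exists>T. noncrossing_tour X T \<and>
                   tour_length T \<ge> real n / 2 * (1 - \<epsilon>) * opt_tour_length X))"
proof (intro exI[of _ "1::real"] conjI allI impI)
  fix \<epsilon> :: real
  assume \<epsilon>: "0 < \<epsilon> \<and> \<epsilon> < 1"
  obtain k where n: "n = 2*k"
    using assms by blast
  define s where "s = \<epsilon> / (2 * (2 * real k + 1)^2)"
  have s_eq: "s * (2 * (2 * real k + 1)^2) = \<epsilon>" and s: "0 < s"
    using \<epsilon> by (simp_all add: s_def)
  have small: "2 * s \<le> \<epsilon>" "2 * real k * s * (2 * real k + 1) \<le> \<epsilon>"
    using s by (simp_all add: s_eq[symmetric] power2_eq_square algebra_simps)
  with \<epsilon> have "s < 1" by simp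
  have "real n / 2 * (1 - \<epsilon>) * opt_tour_length (set (zigzag_tour s k)) \<le> tour_length (zigzag_tour s k)"
    using zigzag_tour_ratio[OF s \<open>s < 1\<close> _ small] \<epsilon> n by simp
  then show "\<exists>X. finite X \<and> card X = n \<and>
      (\<exists>T. noncrossing_tour X T \<and> real n / 2 * (1 - \<epsilon>) * opt_tour_length X \<le> tour_length T)"
    using zigzag_noncrossing_tour[OF s \<open>s < 1\<close>] card_zigzag_tour[OF s \<open>s < 1\<close>] n by blast
qed simp

end
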